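(* Let $(M,\cdot,1)$ be an arbitrary monoid, $\Sigma$ a finite alphabet, and $\ell:\Sigma^*\to M$ an $M$-language. The following two conditions are equivalent: (i) $\ell$ is a recognizable $M$-language; (ii) there exists a factorization $(g,f)$ on $L$ such that the right congruence $\equiv^{(g,f)}_{f(\ell)}$ on $\Sigma^*$ has finite index.
   Context: $\Sigma^*$ is the free monoid of finite words over $\Sigma$, with empty word $\varepsilon$. An $M$-language is a total function $\ell:\Sigma^*\to M$; $L$ denotes the set of all $M$-languages. For $m\in M$, $\ell\in L$, $m\cdot\ell\in L$ is defined by $(m\cdot\ell)(\gamma)=m\cdot\ell(\gamma)$. Let $F$ be the set of all functions $L\to L$ (with $f_e$ the identity) and $G$ the set of all functions $L\to M$. A factorization on $L$ is a pair $(g,f)\in G\times F$ with $g(\ell)\cdot f(\ell)=\ell$ for every $\ell\in L$. For a word $\alpha$, $\Delta_\alpha\in F$ is defined by $\Delta_\alpha(\ell)(\gamma)=\ell(\alpha\gamma)$. Given a factorization $(g,f)$, define $S^{(g,f)}_\alpha\in F$ for $\alpha\in\Sigma^*$ recursively by $S^{(g,f)}_\varepsilon=f_e$ and $S^{(g,f)}_{\alpha\sigma}=f\circ\Delta_\sigma\circ S^{(g,f)}_\alpha$ for $\sigma\in\Sigma$. For $\ell\in L$, the relation $\equiv^{(g,f)}_\ell$ on $\Sigma^*$ is $\alpha\equiv^{(g,f)}_\ell\beta\iff S^{(g,f)}_\alpha(\ell)=S^{(g,f)}_\beta(\ell)$; it is a right congruence, and it has finite index if it has finitely many equivalence classes.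 An $M$-DFA is a tuple $A=(Q,\Sigma,u,i_u,\delta,w,\rho)$ with $Q$ a finite nonempty set of states, $u\in Q$ the initial state, $i_u\in M$ the initial value, $\delta:Q\times\Sigma\to Q$ the state-transition function, $w:Q\times\Sigma\to M$ the monoid-transition function and $\rho:Q\to M$ the final function. Extend $\delta$ to $\Sigma^*$ by $q\varepsilon=q$, $q(\alpha\sigma)=\delta(q\alpha,\sigma)$ (writing $q\alpha$ for the extended $\delta(q,\alpha)$), and $w$ by $w^*(q,\varepsilon)=1$, $w^*(q,\alpha\sigma)=w^*(q,\alpha)\cdot w(q\alpha,\sigma)$. The $M$-language recognized by $A$ is $\mathcal{A}(\alpha)=i_u\cdot w^*(u,\alpha)\cdot\rho(u\alpha)$. An $M$-language is recognizable if it is recognized by some $M$-DFA. *)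

theory Defs
  imports Main
begin

type_synonym ('a, 'm) mlang = "'a list \<Rightarrow> 'm"

definition is_factorization ::
  "(('a, 'm::monoid_mult) mlang \<Rightarrow> 'm) \<Rightarrow> (('a, 'm) mlang \<Rightarrow> ('a, 'm) mlang) \<Rightarrow> bool" where
  "is_factorization g f \<longleftrightarrow> (\<forall>l. (\<lambda>\<gamma>. g l * f l \<gamma>) = l)"

definition Delta :: "'a list \<Rightarrow> ('a, 'm) mlang \<Rightarrow> ('a, 'm) mlang" where
  "Delta \<alpha> l = (\<lambda>\<gamma>. l (\<alpha> @ \<gamma>))"

text \<open>S_eps = id, S_(alpha sigma) = f o Delta_sigma o S_alpha (left-to-right fold).\<close>
definition S_fact ::
  "(('a, 'm) mlang \<Rightarrow> 'm) \<Rightarrow> (('a, 'm) mlang \<Rightarrow> ('a, 'm) mlang) \<Rightarrow> 'a list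
     \<Rightarrow> ('a, 'm) mlang \<Rightarrow> ('a, 'm) mlang" where
  "S_fact g f \<alpha> = fold (\<lambda>\<sigma> h. f \<circ> Delta [\<sigma>] \<circ> h) \<alpha> id"

definition cong_rel ::
  "(('a, 'm) mlang \<Rightarrow> 'm) \<Rightarrow> (('a, 'm) mlang \<Rightarrow> ('a, 'm) mlang) \<Rightarrow> ('a, 'm) mlang
     \<Rightarrow> ('a list \<times> 'a list) set" where
  "cong_rel g f l = {(\<alpha>, \<beta>). S_fact g f \<alpha> l = S_fact g f \<beta> l}"

definition finite_index :: "('b \<times> 'b) set \<Rightarrow> bool" where
  "finite_index R \<longleftrightarrow> finite (UNIV // R)"

text \<open>M-DFAs: states are natural numbers drawn from a finite nonempty set Q
  (every finite state set is in bijection with such a set).\<close>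

definition delta_star :: "(nat \<Rightarrow> 'a \<Rightarrow> nat) \<Rightarrow> nat \<Rightarrow> 'a list \<Rightarrow> nat" where
  "delta_star \<delta> q \<alpha> = fold (\<lambda>\<sigma> p. \<delta> p \<sigma>) \<alpha> q"

text \<open>w^*(q, eps) = 1, w^*(q, alpha sigma) = w^*(q, alpha) * w(q alpha, sigma).\<close>
definition w_star :: "(nat \<Rightarrow> 'a \<Rightarrow> nat) \<Rightarrow> (nat \<Rightarrow> 'a \<Rightarrow> 'm::monoid_mult) \<Rightarrow> nat \<Rightarrow> 'a list \<Rightarrow> 'm" where
  "w_star \<delta> w q \<alpha> = snd (fold (\<lambda>\<sigma> (p, m). (\<delta> p \<sigma>, m * w p \<sigma>)) \<alpha> (q, 1))"

definition is_MDFA :: "nat set \<Rightarrow> nat \<Rightarrow> (nat \<Rightarrow> 'a \<Rightarrow> nat) \<Rightarrow> bool" where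
  "is_MDFA Q u \<delta> \<longleftrightarrow> finite Q \<and> Q \<noteq> {} \<and> u \<in> Q \<and> (\<forall>q\<in>Q. \<forall>\<sigma>. \<delta> q \<sigma> \<in> Q)"

definition MDFA_lang ::
  "nat \<Rightarrow> 'm::monoid_mult \<Rightarrow> (nat \<Rightarrow> 'a \<Rightarrow> nat) \<Rightarrow> (nat \<Rightarrow> 'a \<Rightarrow> 'm) \<Rightarrow> (nat \<Rightarrow> 'm) \<Rightarrow> ('a, 'm) mlang" where
  "MDFA_lang u iu \<delta> w \<rho> = (\<lambda>\<alpha>. iu * w_star \<delta> w u \<alpha> * \<rho> (delta_star \<delta> u \<alpha>))"

definition recognizable :: "('a, 'm::monoid_mult) mlang \<Rightarrow> bool" where
  "recognizable l \<longleftrightarrow> (\<exists>Q u iu \<delta> w \<rho>. is_MDFA Q u \<delta> \<and> MDFA_lang u iu \<delta> w \<rho> = l)"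

end

theory Submission
  imports Defs
begin

text \<open>A recognizable language is a scalar multiple of the language recognized from a state, and
  the languages recognized from the states of an M-DFA are closed under left quotients by a
  letter up to a scalar factor. Choosing \<open>f\<close> to pick such a state language from each of its
  scalar multiples, every \<open>S\<^sub>\<alpha>(f \<ell>)\<close> is a state language, so there are finitely many.
  Conversely, the finitely many \<open>S\<^sub>\<alpha>(f \<ell>)\<close> serve as states of an M-DFA: reading \<open>\<sigma>\<close> in state
  \<open>k\<close> leads to \<open>f (\<Delta>\<^sub>\<sigma> k)\<close> with weight \<open>g (\<Delta>\<^sub>\<sigma> k)\<close>, and the final value of \<open>k\<close> is \<open>k \<epsilon>\<close>.\<close>

lemma quotient_kernel:
  "UNIV // {(a, b). h a = h b} = (\<lambda>v. h -` {v}) ` range h"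
proof -
  have "{b. h a = h b} = h -` {h a}" for a by auto
  then show ?thesis unfolding quotient_def by (auto simp: Image_def)
qed

lemma finite_index_kernel_iff: "finite_index {(a, b). h a = h b} \<longleftrightarrow> finite (range h)"
proof -
  have "inj_on (\<lambda>v. h -` {v}) (range h)"
    by (rule inj_onI) auto
  then show ?thesis
    unfolding finite_index_def quotient_kernel using finite_imageD by blast
qed

lemma finite_index_cong_rel_iff:
  "finite_index (cong_rel g f l) \<longleftrightarrow> finite (range (\<lambda>\<alpha>. S_fact g f \<alpha> l))"
  unfolding cong_rel_def by (rule finite_index_kernel_iff)

lemma S_fact_Nil [simp]: "S_fact g f [] l = l"
  by (simp add: S_fact_def)

lemma S_fact_snoc: "S_fact g f (\<alpha> @ [\<sigma>]) l = f (Delta [\<sigma>] (S_fact g f \<alpha> l))"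
  by (simp add: S_fact_def)

lemma delta_star_Nil [simp]: "delta_star \<delta> q [] = q"
  by (simp add: delta_star_def)

lemma delta_star_Cons [simp]: "delta_star \<delta> q (\<sigma> # \<gamma>) = delta_star \<delta> (\<delta> q \<sigma>) \<gamma>"
  by (simp add: delta_star_def)

lemma fold_w_star:
  "fold (\<lambda>\<sigma> (p, m). (\<delta> p \<sigma>, m * w p \<sigma>)) \<gamma> (q, m) = (delta_star \<delta> q \<gamma>, m * w_star \<delta> w q \<gamma>)"
proof (induction \<gamma> arbitrary: q m)
  case Nil
  then show ?case by (simp add: w_star_def)
next
  case (Cons \<sigma> \<gamma>)
  have "w_star \<delta> w q (\<sigma> # \<gamma>) = w q \<sigma> * w_star \<delta> w (\<delta> q \<sigma>) \<gamma>"
    using Cons[of "\<delta> q \<sigma>" "1 * w q \<sigma>"] by (simp add: w_star_def)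
  then show ?case
    using Cons[of "\<delta> q \<sigma>" "m * w q \<sigma>"] by (simp add: mult.assoc)
qed

lemma w_star_Nil [simp]: "w_star \<delta> w q [] = 1"
  by (simp add: w_star_def)

lemma w_star_Cons [simp]: "w_star \<delta> w q (\<sigma> # \<gamma>) = w q \<sigma> * w_star \<delta> w (\<delta> q \<sigma>) \<gamma>"
  using fold_w_star[of \<delta> w \<gamma> "\<delta> q \<sigma>" "1 * w q \<sigma>"] by (simp add: w_star_def)

definition state_lang ::
  "(nat \<Rightarrow> 'a \<Rightarrow> nat) \<Rightarrow> (nat \<Rightarrow> 'a \<Rightarrow> 'm::monoid_mult) \<Rightarrow> (nat \<Rightarrow> 'm) \<Rightarrow> nat \<Rightarrow> ('a, 'm) mlang" where
  "state_lang \<delta> w \<rho> q = (\<lambda>\<gamma>. w_star \<delta> w q \<gamma> * \<rho> (delta_star \<delta> q \<gamma>))"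

lemma MDFA_lang_eq_state_lang:
  "MDFA_lang u iu \<delta> w \<rho> = (\<lambda>\<gamma>. iu * state_lang \<delta> w \<rho> u \<gamma>)"
  by (simp add: MDFA_lang_def state_lang_def mult.assoc)

lemma state_lang_Nil: "state_lang \<delta> w \<rho> q [] = \<rho> q"
  by (simp add: state_lang_def)

lemma Delta_state_lang:
  "Delta [\<sigma>] (state_lang \<delta> w \<rho> q) = (\<lambda>\<gamma>. w q \<sigma> * state_lang \<delta> w \<rho> (\<delta> q \<sigma>) \<gamma>)"
  by (simp add: Delta_def state_lang_def mult.assoc)

lemma eq_state_lang_if_transition_equations:
  assumes closed: "\<And>q \<sigma>. q \<in> Q \<Longrightarrow> \<delta> q \<sigma> \<in> Q"
    and final: "\<And>q. q \<in> Q \<Longrightarrow> k q [] = \<rho> q"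
    and step: "\<And>q \<sigma>. q \<in> Q \<Longrightarrow> Delta [\<sigma>] (k q) = (\<lambda>\<gamma>. w q \<sigma> * k (\<delta> q \<sigma>) \<gamma>)"
    and "q \<in> Q"
  shows "k q \<gamma> = state_lang \<delta> w \<rho> q \<gamma>"
  using \<open>q \<in> Q\<close>
proof (induction \<gamma> arbitrary: q)
  case Nil
  then show ?case by (simp add: final state_lang_Nil)
next
  case (Cons \<sigma> \<gamma>)
  have "k q (\<sigma> # \<gamma>) = Delta [\<sigma>] (k q) \<gamma>" by (simp add: Delta_def)
  also have "\<dots> = w q \<sigma> * state_lang \<delta> w \<rho> (\<delta> q \<sigma>) \<gamma>"
    using Cons by (simp add: step closed)
  also have "\<dots> = state_lang \<delta> w \<rho> q (\<sigma> # \<gamma>)"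
    using Delta_state_lang[of \<sigma> \<delta> w \<rho> q] by (simp add: Delta_def fun_eq_iff)
  finally show ?case .
qed

lemma recognizable_if_transition_equations:
  fixes Q :: "nat set"
  assumes "finite Q" and "u \<in> Q"
    and "\<And>q \<sigma>. q \<in> Q \<Longrightarrow> \<delta> q \<sigma> \<in> Q"
    and "\<And>q. q \<in> Q \<Longrightarrow> k q [] = \<rho> q"
    and "\<And>q \<sigma>. q \<in> Q \<Longrightarrow> Delta [\<sigma>] (k q) = (\<lambda>\<gamma>. w q \<sigma> * k (\<delta> q \<sigma>) \<gamma>)"
  shows "recognizable (\<lambda>\<gamma>. m * k u \<gamma>)"
proof -
  have "is_MDFA Q u \<delta>"
    using assms by (auto simp: is_MDFA_def)
  moreover have "MDFA_lang u m \<delta> w \<rho> = (\<lambda>\<gamma>. m * k u \<gamma>)"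
    using eq_state_lang_if_transition_equations[OF assms(3-5) \<open>u \<in> Q\<close>]
    by (simp add: MDFA_lang_eq_state_lang)
  ultimately show ?thesis
    unfolding recognizable_def by blast
qed

lemma recognizable_if_finite_residuals:
  assumes fact: "is_factorization g f"
    and fin: "finite (range (\<lambda>\<alpha>. S_fact g f \<alpha> l))"
  shows "recognizable (\<lambda>\<gamma>. m * l \<gamma>)"
proof -
  define R where "R = range (\<lambda>\<alpha>. S_fact g f \<alpha> l)"
  have l_in_R: "l \<in> R"
    unfolding R_def by (metis S_fact_Nil rangeI)
  have step_in_R: "f (Delta [\<sigma>] k) \<in> R" if "k \<in> R" for k \<sigma>
  proof -
    from that obtain \<alpha> where "k = S_fact g f \<alpha> l" unfolding R_def by blast
    then have "f (Delta [\<sigma>] k) = S_fact g f (\<alpha> @ [\<sigma>]) l" by (simp add: S_fact_snoc)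
    then show ?thesis unfolding R_def by simp
  qed
  obtain enc :: "('a, 'b) mlang \<Rightarrow> nat" where "inj_on enc R"
    using finite_imp_inj_to_nat_seg[OF fin] unfolding R_def by metis
  define dec where "dec = inv_into R enc"
  have dec_enc [simp]: "dec (enc k) = k" if "k \<in> R" for k
    unfolding dec_def using \<open>inj_on enc R\<close> that by simp
  define \<delta> where "\<delta> q \<sigma> = enc (f (Delta [\<sigma>] (dec q)))" for q \<sigma>
  define w where "w q \<sigma> = g (Delta [\<sigma>] (dec q))" for q \<sigma>
  define \<rho> where "\<rho> q = dec q []" for q
  have "recognizable (\<lambda>\<gamma>. m * dec (enc l) \<gamma>)"
  proof (rule recognizable_if_transition_equations)
    show "finite (enc ` R)" using fin unfolding R_def by simp
    show "enc l \<in> enc ` R" using l_in_R by simp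
    show "\<delta> q \<sigma> \<in> enc ` R" if "q \<in> enc ` R" for q \<sigma>
      using that step_in_R unfolding \<delta>_def by auto
    show "dec q [] = \<rho> q" for q unfolding \<rho>_def ..
    show "Delta [\<sigma>] (dec q) = (\<lambda>\<gamma>. w q \<sigma> * dec (\<delta> q \<sigma>) \<gamma>)" if "q \<in> enc ` R" for q \<sigma>
    proof -
      from that obtain k where "k \<in> R" and q: "q = enc k" by blast
      have "dec (\<delta> q \<sigma>) = f (Delta [\<sigma>] k)"
        using \<open>k \<in> R\<close> step_in_R unfolding \<delta>_def q by simp
      moreover have "Delta [\<sigma>] k = (\<lambda>\<gamma>. g (Delta [\<sigma>] k) * f (Delta [\<sigma>] k) \<gamma>)"
        using fact unfolding is_factorization_def by simp
      ultimately show ?thesis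
        using \<open>k \<in> R\<close> unfolding w_def q by simp
    qed
  qed
  then show ?thesis using l_in_R by simp
qed

definition left_multiples :: "('a, 'm::monoid_mult) mlang set \<Rightarrow> ('a, 'm) mlang set" where
  "left_multiples K = {(\<lambda>\<gamma>. m * k \<gamma>) | m k. k \<in> K}"

lemma ex_factorization_into:
  "\<exists>g f. is_factorization g f \<and> (\<forall>l \<in> left_multiples K. f l \<in> K)"
proof -
  have "\<forall>l. \<exists>p. (l \<in> left_multiples K \<longrightarrow> snd p \<in> K) \<and> l = (\<lambda>\<gamma>. fst p * snd p \<gamma>)"
  proof
    fix l :: "('a, 'b) mlang"
    show "\<exists>p. (l \<in> left_multiples K \<longrightarrow> snd p \<in> K) \<and> l = (\<lambda>\<gamma>. fst p * snd p \<gamma>)"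
    proof (cases "l \<in> left_multiples K")
      case True
      then show ?thesis unfolding left_multiples_def by fastforce
    next
      case False
      then show ?thesis by (intro exI[of _ "(1, l)"]) simp
    qed
  qed
  then obtain c where "\<And>l. (l \<in> left_multiples K \<longrightarrow> snd (c l) \<in> K) \<and> l = (\<lambda>\<gamma>. fst (c l) * snd (c l) \<gamma>)"
    by metis
  then have "is_factorization (fst \<circ> c) (snd \<circ> c) \<and> (\<forall>l \<in> left_multiples K. (snd \<circ> c) l \<in> K)"
    unfolding is_factorization_def by (metis comp_apply)
  then show ?thesis by blast
qed

lemma S_fact_in_if_Delta_closed:
  assumes into: "\<forall>l \<in> left_multiples K. f l \<in> K"
    and closed: "\<And>k \<sigma>. k \<in> K \<Longrightarrow> Delta [\<sigma>] k \<in> left_multiples K"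
    and "k \<in> K"
  shows "S_fact g f \<alpha> k \<in> K"
proof (induction \<alpha> rule: rev_induct)
  case Nil
  then show ?case using \<open>k \<in> K\<close> by simp
next
  case (snoc \<sigma> \<alpha>)
  then show ?case using into closed by (simp add: S_fact_snoc)
qed

lemma finite_residuals_if_recognizable:
  assumes "recognizable l"
  shows "\<exists>g f. is_factorization g f \<and> finite (range (\<lambda>\<alpha>. S_fact g f \<alpha> (f l)))"
proof -
  obtain Q u iu \<delta> w \<rho> where A: "is_MDFA Q u \<delta>" and l: "l = MDFA_lang u iu \<delta> w \<rho>"
    using assms unfolding recognizable_def by metis
  define K where "K = state_lang \<delta> w \<rho> ` Q"
  obtain g f where fact: "is_factorization g f" and into: "\<forall>l \<in> left_multiples K. f l \<in> K"
    using ex_factorization_into by blast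
  have "l \<in> left_multiples K"
    using A unfolding l MDFA_lang_eq_state_lang left_multiples_def K_def is_MDFA_def by blast
  then have "f l \<in> K" using into by blast
  moreover have "Delta [\<sigma>] k \<in> left_multiples K" if "k \<in> K" for k \<sigma>
  proof -
    from that obtain q where "q \<in> Q" and k: "k = state_lang \<delta> w \<rho> q" unfolding K_def by blast
    then have "state_lang \<delta> w \<rho> (\<delta> q \<sigma>) \<in> K" using A unfolding K_def is_MDFA_def by blast
    then show ?thesis unfolding k Delta_state_lang left_multiples_def by blast
  qed
  ultimately have "range (\<lambda>\<alpha>. S_fact g f \<alpha> (f l)) \<subseteq> K"
    using S_fact_in_if_Delta_closed[OF into] by blast
  moreover have "finite K"
    using A unfolding K_def is_MDFA_def by simp
  ultimately show ?thesis
    using fact finite_subset by blast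
qed

theorem theorem1:
  fixes l :: "'a::finite list \<Rightarrow> 'm::monoid_mult"
  shows "recognizable l \<longleftrightarrow>
    (\<exists>g f. is_factorization g f \<and> finite_index (cong_rel g f (f l)))"
proof
  assume "recognizable l"
  then show "\<exists>g f. is_factorization g f \<and> finite_index (cong_rel g f (f l))"
    using finite_residuals_if_recognizable finite_index_cong_rel_iff by metis
next
  assume "\<exists>g f. is_factorization g f \<and> finite_index (cong_rel g f (f l))"
  then obtain g f where fact: "is_factorization g f" and "finite_index (cong_rel g f (f l))"
    by blast
  then have "recognizable (\<lambda>\<gamma>. g l * f l \<gamma>)"
    using recognizable_if_finite_residuals finite_index_cong_rel_iff by metis
  then show "recognizable l"
    using fact unfolding is_factorization_def by metis
qed

end
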